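(* Let $m\ge1$, let $Y$ be a set of $m$ indices and $(z_i)_{i\in Y}$ pairwise distinct complex numbers, and let $t\in\mathbb{C}$, $\tau\in\mathbb{Z}$ be such that all denominators below are nonzero. Then \[ \sum_{(J,K)}(-1)^{n_D}\prod_{j\in J}\frac{1}{tz_j\omega^{\tau+n_D+1}-1}\prod_{q=1}^{n_D}\frac{\omega^{q-1}}{tz_{k_q}\omega^{\tau+n_D}-1}\prod_{j\in J}\prod_{k\in K}\frac{z_k-z_j\omega}{z_k-z_j}=0, \] where the sum runs over all ordered pairs $(J,K)$ of disjoint subsets with $J\cup K=Y$, $n_D=\#K$, and $K=\{k_1,\ldots,k_{n_D}\}$.
   Context: $\omega$ is a fixed primitive $N$-th root of unity, $N\ge2$. *)

theory Defs
  imports "HOL-Analysis.Analysis"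
begin

definition primitive_root_of_unity :: "nat \<Rightarrow> complex \<Rightarrow> bool" where
  "primitive_root_of_unity N w \<longleftrightarrow> w ^ N = 1 \<and> (\<forall>k. 0 < k \<and> k < N \<longrightarrow> w ^ k \<noteq> 1)"

end

theory Submission
  imports Defs "HOL-Computational_Algebra.Polynomial"
begin

(*
  The summand depends on K through the weight
      weight w z Y K = prod_{j in Y - K} prod_{k in K} (z_k - z_j w) / (z_k - z_j)
  and through the denominators b_n z_i - 1 with b_n = t w^(tau + n), where w is the root of
  unity and n = #K.  Grouping the sum by n, the n-th layer E_n has the closed form
      E_n = alpha_n / B_n + w^n [m-1, n]_w / B_(n+1),     B_n = prod_(i in Y) (b_n z_i - 1),
  with Gaussian binomials [m, r]_w and alpha_n = [m-1, n-1]_w.  The prefactor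
  c_n = (-1)^n w^(0 + 1 + ... + (n-1)) satisfies c_(n+1) = - c_n w^n, hence c_n E_n = g_n - g_(n+1)
  for g_n = c_n alpha_n / B_n, and the whole sum telescopes to g_0 - g_(m+1) = 0.

  The only property of the root of unity that is needed is that it is nonzero.
*)

section \<open>Gaussian binomials, weights and sums over subsets\<close>

fun gauss_binom :: "complex \<Rightarrow> nat \<Rightarrow> nat \<Rightarrow> complex" where
  "gauss_binom w 0 r = (if r = 0 then 1 else 0)"
| "gauss_binom w (Suc m) 0 = 1"
| "gauss_binom w (Suc m) (Suc r) = gauss_binom w m r + w ^ Suc r * gauss_binom w m (Suc r)"

lemma gauss_binom_0_right [simp]: "gauss_binom w m 0 = 1"
  by (cases m) auto

lemma gauss_binom_Suc:
  "gauss_binom w (Suc m) r = (if r = 0 then 0 else gauss_binom w m (r - 1)) + w ^ r * gauss_binom w m r"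
  by (cases r) auto

lemma gauss_binom_eq_0: "m < r \<Longrightarrow> gauss_binom w m r = 0"
proof (induction m arbitrary: r)
  case (Suc m)
  then show ?case by (cases r) auto
qed simp

lemma gauss_binom_diag [simp]: "gauss_binom w m m = 1"
  by (induction m) (auto simp: gauss_binom_eq_0)

definition weight :: "complex \<Rightarrow> ('a \<Rightarrow> complex) \<Rightarrow> 'a set \<Rightarrow> 'a set \<Rightarrow> complex" where
  "weight w z Y K = (\<Prod>j\<in>Y - K. \<Prod>k\<in>K. (z k - z j * w) / (z k - z j))"

lemma weight_insert_out:
  assumes "finite Y" "i \<notin> Y" "K \<subseteq> Y"
  shows "weight w z (insert i Y) K = weight w z Y K * (\<Prod>k\<in>K. (z k - z i * w) / (z k - z i))"
proof -
  have "insert i Y - K = insert i (Y - K)" "i \<notin> Y - K" using assms by auto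
  then show ?thesis
    unfolding weight_def using assms(1) by (simp add: mult.commute)
qed

lemma weight_insert_in:
  assumes "finite K" "i \<notin> Y" "K \<subseteq> Y"
  shows "weight w z (insert i Y) (insert i K)
       = weight w z Y K * (\<Prod>j\<in>Y - K. (z i - z j * w) / (z i - z j))"
proof -
  have "insert i Y - insert i K = Y - K" "i \<notin> K" using assms by auto
  then show ?thesis
    unfolding weight_def using assms(1) by (simp add: prod.distrib[symmetric] mult.commute)
qed

lemma sum_Pow_insert:
  assumes "finite F" "y \<notin> F"
  shows "(\<Sum>K\<in>Pow (insert y F). f K) = (\<Sum>K\<in>Pow F. f K) + (\<Sum>K\<in>Pow F. f (insert y K))"
proof -
  have "inj_on (insert y) (Pow F)" "Pow F \<inter> insert y ` Pow F = {}"
    using assms(2) by (auto simp: inj_on_def)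
  then show ?thesis
    unfolding Pow_insert using assms(1) by (simp add: sum.union_disjoint sum.reindex)
qed

lemma sum_card_slice_insert:
  assumes "finite F" "y \<notin> F"
  shows "(\<Sum>K\<in>Pow (insert y F). if P (card K) then f K else 0)
       = (\<Sum>K\<in>Pow F. if P (card K) then f K else 0)
       + (\<Sum>K\<in>Pow F. if P (Suc (card K)) then f (insert y K) else 0)"
proof -
  have "card (insert y K) = Suc (card K)" if "K \<in> Pow F" for K
    using that assms by (auto intro: card_insert_disjoint finite_subset)
  then show ?thesis
    unfolding sum_Pow_insert[OF assms] by (intro arg_cong2[where f = "(+)"] sum.cong) auto
qed

lemma sum_card_slice_single:
  assumes "finite Y" "A \<subseteq> Y" "card A = n" "\<And>K. K \<subseteq> Y \<Longrightarrow> card K = n \<Longrightarrow> K = A"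
  shows "(\<Sum>K\<in>Pow Y. if card K = n then f K else 0) = f A"
proof -
  have "(\<Sum>K\<in>Pow Y. if card K = n then f K else 0) = (\<Sum>K\<in>Pow Y. if K = A then f K else 0)"
  proof (rule sum.cong[OF refl])
    fix K assume "K \<in> Pow Y"
    then have "card K = n \<longleftrightarrow> K = A" using assms(3,4) by blast
    then show "(if card K = n then f K else 0) = (if K = A then f K else 0)" by simp
  qed
  then show ?thesis using assms(1,2) by simp
qed

lemma sum_Pow_by_card:
  assumes "finite Y"
  shows "(\<Sum>K\<in>Pow Y. f K) = (\<Sum>n\<le>card Y. \<Sum>K\<in>Pow Y. if card K = n then f K else 0)"
proof -
  have "(\<Sum>n\<le>card Y. \<Sum>K\<in>Pow Y. if card K = n then f K else 0)
      = (\<Sum>K\<in>Pow Y. \<Sum>n\<le>card Y. if card K = n then f K else 0)"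
    by (rule sum.swap)
  also have "\<dots> = (\<Sum>K\<in>Pow Y. f K)"
    using assms by (intro sum.cong) (auto simp: card_mono)
  finally show ?thesis ..
qed

lemma card_add_card_Diff: "finite F \<Longrightarrow> K \<subseteq> F \<Longrightarrow> card K + card (F - K) = card F"
  using card_Int_Diff[of F K] by (simp add: Int_absorb1 Int_absorb2)

lemma prod_divide_cancel:
  fixes a d :: "'a \<Rightarrow> 'b :: field"
  assumes "\<And>x. x \<in> A \<Longrightarrow> d x \<noteq> 0"
  shows "(\<Prod>x\<in>A. a x / d x) * (\<Prod>x\<in>A. d x) = (\<Prod>x\<in>A. a x)"
  using assms by (simp add: prod.distrib[symmetric])

section \<open>Products of linear polynomials\<close>

lemma coeff_mult_top:
  fixes p q :: "'a :: idom poly"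
  assumes "degree p \<le> m" "degree q \<le> n"
  shows "coeff (p * q) (m + n) = coeff p m * coeff q n"
proof (cases "degree p = m \<and> degree q = n")
  case True
  then show ?thesis using coeff_mult_degree_sum[of p q] by simp
next
  case False
  then have "degree (p * q) < m + n" "coeff p m * coeff q n = 0"
    using assms degree_mult_le[of p q] by (auto simp: coeff_eq_0)
  then show ?thesis by (simp add: coeff_eq_0)
qed

lemma linear_prod_top:
  fixes a c :: "'b \<Rightarrow> 'a :: idom"
  assumes "finite A"
  shows "degree (\<Prod>k\<in>A. [:a k, c k:]) \<le> card A"
    and "coeff (\<Prod>k\<in>A. [:a k, c k:]) (card A) = (\<Prod>k\<in>A. c k)"
proof -
  have "degree (\<Prod>k\<in>A. [:a k, c k:]) \<le> card A \<and> coeff (\<Prod>k\<in>A. [:a k, c k:]) (card A) = (\<Prod>k\<in>A. c k)"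
    using assms
  proof (induction A rule: finite_induct)
    case (insert x F)
    define P where "P = (\<Prod>k\<in>F. [:a k, c k:])"
    have "degree [:a x, c x:] \<le> 1" by simp
    then have "degree ([:a x, c x:] * P) \<le> 1 + card F"
      using insert.IH unfolding P_def by (meson add_mono degree_mult_le order_trans)
    moreover have "coeff ([:a x, c x:] * P) (1 + card F) = c x * coeff P (card F)"
      using coeff_mult_top[of "[:a x, c x:]" 1 P "card F"] insert.IH unfolding P_def by simp
    ultimately show ?case
      using insert unfolding P_def by (simp del: mult_pCons_left)
  qed simp
  then show "degree (\<Prod>k\<in>A. [:a k, c k:]) \<le> card A"
    and "coeff (\<Prod>k\<in>A. [:a k, c k:]) (card A) = (\<Prod>k\<in>A. c k)" by simp_all
qed

lemma degree_linear_prod_le: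
  fixes a c :: "'b \<Rightarrow> 'a :: idom"
  assumes "finite A"
  shows "degree (\<Prod>k\<in>A. [:a k, c k:]) \<le> card {k\<in>A. c k \<noteq> 0}"
proof -
  have "degree (\<Prod>k\<in>A. [:a k, c k:]) \<le> (\<Sum>k\<in>A. degree [:a k, c k:])"
    using degree_prod_sum_le[OF assms, of "\<lambda>k. [:a k, c k:]"] by (simp only: comp_def)
  also have "\<dots> = (\<Sum>k\<in>A. if c k \<noteq> 0 then 1 else 0)"
    by (intro sum.cong) auto
  also have "\<dots> = card {k\<in>A. c k \<noteq> 0}"
    using sum.inter_filter[OF assms, of "\<lambda>_. 1 :: nat"] by simp
  finally show ?thesis .
qed

section \<open>The classical identity for the weights\<close>

text \<open>To add a new index y to F with z y playing the role of a variable x, the denominators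
  z_k - x of the new weights are cleared by the node polynomial prod_(j in F) (x - z_j).  The
  numerators that remain are out_poly (y not in K) and in_poly (y in K).\<close>

definition node_poly :: "('a \<Rightarrow> complex) \<Rightarrow> 'a set \<Rightarrow> complex poly" where
  "node_poly z F = (\<Prod>j\<in>F. [:- z j, 1:])"

definition out_poly :: "complex \<Rightarrow> ('a \<Rightarrow> complex) \<Rightarrow> 'a set \<Rightarrow> 'a set \<Rightarrow> complex poly" where
  "out_poly w z F K = (\<Prod>k\<in>K. [:- z k, w:]) * (\<Prod>j\<in>F - K. [:- z j, 1:])"

definition in_poly :: "complex \<Rightarrow> ('a \<Rightarrow> complex) \<Rightarrow> 'a set \<Rightarrow> 'a set \<Rightarrow> complex poly" where
  "in_poly w z F K = (\<Prod>k\<in>K. [:- z k, 1:]) * (\<Prod>j\<in>F - K. [:- (z j * w), 1:])"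

lemma node_poly_top: "finite F \<Longrightarrow> degree (node_poly z F) \<le> card F \<and> coeff (node_poly z F) (card F) = 1"
  unfolding node_poly_def using linear_prod_top[of F "\<lambda>j. - z j" "\<lambda>_. 1"] by simp

lemma out_poly_top:
  assumes "finite F" "K \<subseteq> F"
  shows "degree (out_poly w z F K) \<le> card F \<and> coeff (out_poly w z F K) (card F) = w ^ card K"
proof -
  have fin: "finite K" "finite (F - K)" using assms by (auto intro: finite_subset)
  show ?thesis
    unfolding out_poly_def card_add_card_Diff[OF assms, symmetric]
    using linear_prod_top[OF fin(1), of "\<lambda>k. - z k" "\<lambda>_. w"]
      linear_prod_top[OF fin(2), of "\<lambda>j. - z j" "\<lambda>_. 1"]
    by (simp add: coeff_mult_top order_trans[OF degree_mult_le] add_mono)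
qed

lemma in_poly_top:
  assumes "finite F" "K \<subseteq> F"
  shows "degree (in_poly w z F K) \<le> card F \<and> coeff (in_poly w z F K) (card F) = 1"
proof -
  have fin: "finite K" "finite (F - K)" using assms by (auto intro: finite_subset)
  show ?thesis
    unfolding in_poly_def card_add_card_Diff[OF assms, symmetric]
    using linear_prod_top[OF fin(1), of "\<lambda>k. - z k" "\<lambda>_. 1"]
      linear_prod_top[OF fin(2), of "\<lambda>j. - (z j * w)" "\<lambda>_. 1"]
    by (simp add: coeff_mult_top order_trans[OF degree_mult_le] add_mono)
qed

lemma weight_insert_out_cleared:
  assumes "finite F" "y \<notin> F" "z y \<notin> z ` F" "K \<subseteq> F"
  shows "weight w z (insert y F) K * poly (node_poly z F) (z y)
       = weight w z F K * poly (out_poly w z F K) (z y)"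
proof -
  have ne: "z y - z k \<noteq> 0" if "k \<in> K" for k
    using that assms(3,4) by (metis eq_iff_diff_eq_0 image_eqI subsetD)
  have node: "poly (node_poly z F) (z y) = (\<Prod>k\<in>K. z y - z k) * (\<Prod>j\<in>F - K. z y - z j)"
    unfolding node_poly_def poly_prod using prod.subset_diff[OF assms(4,1)] by (simp add: mult.commute)
  have "(\<Prod>k\<in>K. (z k - z y * w) / (z k - z y)) = (\<Prod>k\<in>K. (z y * w - z k) / (z y - z k))"
    by (intro prod.cong refl) (metis minus_diff_eq minus_divide_divide)
  then have "(\<Prod>k\<in>K. (z k - z y * w) / (z k - z y)) * (\<Prod>k\<in>K. z y - z k) = (\<Prod>k\<in>K. z y * w - z k)"
    using prod_divide_cancel[of K "\<lambda>k. z y - z k" "\<lambda>k. z y * w - z k", OF ne] by simp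
  then show ?thesis
    unfolding weight_insert_out[OF assms(1,2,4)] node out_poly_def by (simp add: poly_prod ac_simps)
qed

lemma weight_insert_in_cleared:
  assumes "finite F" "y \<notin> F" "z y \<notin> z ` F" "K \<subseteq> F"
  shows "weight w z (insert y F) (insert y K) * poly (node_poly z F) (z y)
       = weight w z F K * poly (in_poly w z F K) (z y)"
proof -
  have fin: "finite K" using assms(1,4) by (rule finite_subset[rotated])
  have ne: "z y - z j \<noteq> 0" if "j \<in> F - K" for j
    using that assms(3) by (metis DiffD1 eq_iff_diff_eq_0 image_eqI)
  have node: "poly (node_poly z F) (z y) = (\<Prod>k\<in>K. z y - z k) * (\<Prod>j\<in>F - K. z y - z j)"
    unfolding node_poly_def poly_prod using prod.subset_diff[OF assms(4,1)] by (simp add: mult.commute)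
  have "(\<Prod>j\<in>F - K. (z y - z j * w) / (z y - z j)) * (\<Prod>j\<in>F - K. z y - z j)
      = (\<Prod>j\<in>F - K. z y - z j * w)"
    using prod_divide_cancel[of "F - K" "\<lambda>j. z y - z j", OF ne] by simp
  then show ?thesis
    unfolding weight_insert_in[OF fin assms(2,4)] node in_poly_def by (simp add: poly_prod ac_simps)
qed

text \<open>At a node x = z_i the cleared terms of K \<union> {i} (i taken) and of K (i not taken)
  cancel: both reduce, via the two clearing lemmas for G = F - {i}, to the same product.\<close>

lemma weight_pairs_cancel:
  assumes "finite G" "i \<notin> G" "z i \<notin> z ` G" "K \<subseteq> G"
  shows "weight w z (insert i G) (insert i K) * poly (out_poly w z (insert i G) (insert i K)) (z i)
       + weight w z (insert i G) K * poly (in_poly w z (insert i G) K) (z i) = 0"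
proof -
  have fin: "finite K" using assms(1,4) by (rule finite_subset[rotated])
  have "insert i G - insert i K = G - K" "insert i G - K = insert i (G - K)" "i \<notin> K" "i \<notin> G - K"
    using assms(2,4) by auto
  then have out: "out_poly w z (insert i G) (insert i K) = [:- z i, w:] * out_poly w z G K"
    and inn: "in_poly w z (insert i G) K = [:- (z i * w), 1:] * in_poly w z G K"
    unfolding out_poly_def in_poly_def using fin assms(1)
    by (simp_all add: ac_simps del: mult_pCons_left mult_pCons_right)
  define N where "N = poly (node_poly z G) (z i)"
  have "N \<noteq> 0"
    using assms(1,3) unfolding N_def node_poly_def poly_prod by auto
  moreover have "(weight w z (insert i G) (insert i K) * poly (out_poly w z (insert i G) (insert i K)) (z i)
       + weight w z (insert i G) K * poly (in_poly w z (insert i G) K) (z i)) * N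
     = (z i * w - z i) * (poly (out_poly w z G K) (z i) * (weight w z (insert i G) (insert i K) * N)
                          - poly (in_poly w z G K) (z i) * (weight w z (insert i G) K * N))"
    unfolding out inn by (simp add: algebra_simps)
  moreover have "\<dots> = 0"
    using weight_insert_out_cleared[OF assms] weight_insert_in_cleared[OF assms]
    unfolding N_def by (simp add: ac_simps)
  ultimately show ?thesis by simp
qed

text \<open>Hence the cleared layer sum vanishes at every node: the terms with i \<notin> K in the
  first sum and with i \<in> K in the second vanish, the others cancel in pairs.\<close>

lemma insert_poly_vanishes:
  assumes "finite F" "inj_on z F" "i \<in> F"
  shows "(\<Sum>K\<in>Pow F. if card K = r then weight w z F K * poly (out_poly w z F K) (z i) else 0)
       + (\<Sum>K\<in>Pow F. if Suc (card K) = r then weight w z F K * poly (in_poly w z F K) (z i) else 0) = 0"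
proof -
  define G where "G = F - {i}"
  have F: "F = insert i G" and G: "finite G" "i \<notin> G" "z i \<notin> z ` G"
    using assms unfolding G_def by (auto simp: inj_on_def)
  have out0: "poly (out_poly w z F K) (z i) = 0" if "K \<in> Pow G" for K
    using that G(1,2) unfolding F out_poly_def
    by (auto simp: poly_prod intro!: bexI[of _ i] finite_subset[of "insert i G - K"])
  have in0: "poly (in_poly w z F (insert i K)) (z i) = 0" if "K \<in> Pow G" for K
    using that G(1) finite_subset[of K G] unfolding F in_poly_def by (auto simp: poly_prod)
  have "(\<Sum>K\<in>Pow G. if card K = r then weight w z F K * poly (out_poly w z F K) (z i) else 0) = 0"
    "(\<Sum>K\<in>Pow G. if Suc (Suc (card K)) = r
        then weight w z F (insert i K) * poly (in_poly w z F (insert i K)) (z i) else 0) = 0"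
    using out0 in0 by (auto intro: sum.neutral)
  then have "(\<Sum>K\<in>Pow F. if card K = r then weight w z F K * poly (out_poly w z F K) (z i) else 0)
       + (\<Sum>K\<in>Pow F. if Suc (card K) = r then weight w z F K * poly (in_poly w z F K) (z i) else 0)
      = (\<Sum>K\<in>Pow G. if Suc (card K) = r then weight w z F (insert i K) * poly (out_poly w z F (insert i K)) (z i)
            + weight w z F K * poly (in_poly w z F K) (z i) else 0)"
    unfolding F sum_card_slice_insert[OF G(1,2), where P = "\<lambda>n. n = r"]
      sum_card_slice_insert[OF G(1,2), where P = "\<lambda>n. Suc n = r"]
    by (simp add: sum.distrib[symmetric]) (intro sum.cong; simp)
  also have "\<dots> = 0"
    unfolding F using weight_pairs_cancel[OF G] by (intro sum.neutral) auto
  finally show ?thesis .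
qed

text \<open>The induction step as a polynomial identity in the new variable: both sides have
  degree at most #F, the same top coefficient (by the Pascal recurrence and the induction
  hypothesis) and the same values at the #F distinct nodes z_i.\<close>

lemma insert_poly_identity:
  assumes fin: "finite F" and inj: "inj_on z F"
    and slices: "\<And>r. (\<Sum>K\<in>Pow F. if card K = r then weight w z F K else 0) = gauss_binom w (card F) r"
  shows "(\<Sum>K\<in>Pow F. if card K = r then smult (weight w z F K) (out_poly w z F K) else 0)
       + (\<Sum>K\<in>Pow F. if Suc (card K) = r then smult (weight w z F K) (in_poly w z F K) else 0)
       = smult (gauss_binom w (Suc (card F)) r) (node_poly z F)" (is "?L = ?R")
proof (rule poly_eqI_degree_lead_coeff[where n = "card F" and A = "z ` F"])
  have top:
    "(\<Sum>K\<in>Pow F. if card K = r then weight w z F K * w ^ r else 0) = w ^ r * gauss_binom w (card F) r"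
    "(\<Sum>K\<in>Pow F. if Suc (card K) = r then weight w z F K else 0)
       = (if r = 0 then 0 else gauss_binom w (card F) (r - 1))"
    unfolding slices[symmetric] sum_distrib_left by (auto intro: sum.cong) (cases r; simp)
  show "coeff ?L (card F) = coeff ?R (card F)"
    using out_poly_top[OF fin] in_poly_top[OF fin] node_poly_top[OF fin]
    by (simp add: coeff_sum if_distrib[of "\<lambda>p. coeff p _"] top gauss_binom_Suc cong: if_cong)
  show "card F \<le> card (z ` F)" using card_image[OF inj] by simp
  show "degree ?L \<le> card F"
    using out_poly_top[OF fin] in_poly_top[OF fin]
    by (intro degree_add_le degree_sum_le order.trans[OF degree_smult_le]) (auto simp: fin)
  show "degree ?R \<le> card F"
    using node_poly_top[OF fin] order.trans[OF degree_smult_le] by blast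
  fix x assume "x \<in> z ` F"
  then obtain i where i: "i \<in> F" "x = z i" by blast
  have "poly (node_poly z F) (z i) = 0"
    using i fin unfolding node_poly_def poly_prod by auto
  then show "poly ?L x = poly ?R x"
    using insert_poly_vanishes[OF fin inj i(1), of r w] unfolding i(2)
    by (simp add: poly_sum if_distrib[of "\<lambda>p. poly p _"] cong: if_cong)
qed

text \<open>Induction on Y; the step evaluates the polynomial identity above at
  z y and divides by the nonzero node polynomial.\<close>

lemma weight_slice_sum:
  assumes "finite Y" "inj_on z Y"
  shows "(\<Sum>K\<in>Pow Y. if card K = r then weight w z Y K else 0) = gauss_binom w (card Y) r"
  using assms
proof (induction Y arbitrary: r rule: finite_induct)
  case empty
  then show ?case by (simp add: weight_def)
next
  case (insert y F)
  have inj: "inj_on z F" and zy: "z y \<notin> z ` F"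
    using insert.prems insert.hyps(2) by auto
  define N where "N = poly (node_poly z F) (z y)"
  have "N \<noteq> 0"
    using insert.hyps(1) zy unfolding N_def node_poly_def poly_prod by auto
  have "(\<Sum>K\<in>Pow (insert y F). if card K = r then weight w z (insert y F) K else 0) * N
      = (\<Sum>K\<in>Pow F. if card K = r then weight w z F K * poly (out_poly w z F K) (z y) else 0)
      + (\<Sum>K\<in>Pow F. if Suc (card K) = r then weight w z F K * poly (in_poly w z F K) (z y) else 0)"
    unfolding sum_card_slice_insert[where P = "\<lambda>n. n = r", OF insert.hyps(1,2)]
      distrib_right sum_distrib_right N_def
    using weight_insert_out_cleared[OF insert.hyps(1,2) zy] weight_insert_in_cleared[OF insert.hyps(1,2) zy]
    by (intro arg_cong2[where f = "(+)"] sum.cong) auto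
  also have "\<dots> = gauss_binom w (Suc (card F)) r * N"
    using arg_cong[OF insert_poly_identity[OF insert.hyps(1) inj insert.IH[OF inj]], of "\<lambda>p. poly p (z y)"]
    unfolding N_def by (simp add: poly_sum if_distrib[of "\<lambda>p. poly p _"] cong: if_cong)
  finally show ?case
    using \<open>N \<noteq> 0\<close> insert.hyps by simp
qed

section \<open>The layer identity\<close>

definition layer_poly :: "complex \<Rightarrow> ('a \<Rightarrow> complex) \<Rightarrow> 'a set \<Rightarrow> 'a set \<Rightarrow> complex poly" where
  "layer_poly w z Y K = (\<Prod>k\<in>K. [:- 1, w * z k:]) * (\<Prod>j\<in>Y - K. [:- 1, z j:])"

lemma layer_poly_degree:
  assumes "finite Y" "K \<subseteq> Y" "w \<noteq> 0"
  shows "degree (layer_poly w z Y K) \<le> card {i\<in>Y. z i \<noteq> 0}"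
proof -
  have fin: "finite K" "finite (Y - K)" using assms by (auto intro: finite_subset)
  have split: "{i\<in>Y. z i \<noteq> 0} = {k\<in>K. w * z k \<noteq> 0} \<union> {j\<in>Y - K. z j \<noteq> 0}"
    using assms(2,3) by auto
  have "card {i\<in>Y. z i \<noteq> 0} = card {k\<in>K. w * z k \<noteq> 0} + card {j\<in>Y - K. z j \<noteq> 0}"
    unfolding split using fin by (intro card_Un_disjoint) auto
  then show ?thesis
    unfolding layer_poly_def
    using degree_linear_prod_le[OF fin(1), of "\<lambda>_. -1" "\<lambda>k. w * z k"]
      degree_linear_prod_le[OF fin(2), of "\<lambda>_. -1" z]
    by (metis (no_types, lifting) add_mono degree_mult_le order_trans)
qed

lemma layer_poly_at_0:
  assumes "finite Y" "K \<subseteq> Y"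
  shows "poly (layer_poly w z Y K) 0 = (- 1) ^ card Y"
proof -
  have "finite K" using assms by (auto intro: finite_subset)
  then show ?thesis
    unfolding layer_poly_def card_add_card_Diff[OF assms, symmetric]
    using assms(1) by (simp add: poly_prod power_add)
qed

text \<open>At b = 1/z_i only the subsets containing i survive, and each contributes
  (w - 1) prod_(j in Y - {i}) (b w z_j - 1) times its weight in Y - {i}.\<close>

lemma layer_poly_root:
  assumes fin: "finite Y" and inj: "inj_on z Y" and i: "i \<in> Y" "z i \<noteq> 0"
  defines "x \<equiv> 1 / z i"
  shows "(\<Sum>K\<in>Pow Y. if card K = n then weight w z Y K * poly (layer_poly w z Y K) x else 0)
       = (\<Sum>K\<in>Pow (Y - {i}). if Suc (card K) = n then weight w z (Y - {i}) K else 0)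
         * poly (\<Prod>j\<in>Y. [:- 1, w * z j:]) x"
proof -
  define G where "G = Y - {i}"
  have Y: "Y = insert i G" and G: "finite G" "i \<notin> G" using fin i unfolding G_def by auto
  have xz: "x * z i = 1" unfolding x_def using i(2) by simp
  define PG where "PG = (\<Prod>j\<in>G. - 1 + x * (w * z j))"
  have out: "poly (layer_poly w z Y K) x = 0" if "K \<in> Pow G" for K
    using that G fin xz unfolding Y layer_poly_def
    by (auto simp: poly_prod intro!: bexI[of _ i])
  have inn: "weight w z Y (insert i K) * poly (layer_poly w z Y (insert i K)) x = weight w z G K * ((w - 1) * PG)"
    if "K \<in> Pow G" for K
  proof -
    have K: "K \<subseteq> G" "finite K" "i \<notin> K" and YK: "Y - insert i K = G - K"
      using that G Y finite_subset by auto
    have ne: "z i - z j \<noteq> 0" if "j \<in> G - K" for j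
      using inj i(1) that unfolding G_def by (auto dest: inj_onD)
    have cancel: "(\<Prod>j\<in>G - K. (z i - z j * w) / (z i - z j)) * (\<Prod>j\<in>G - K. - 1 + x * z j)
        = (\<Prod>j\<in>G - K. - 1 + x * (w * z j))"
      unfolding prod.distrib[symmetric] using ne i(2) by (intro prod.cong) (auto simp: x_def field_simps)
    have "weight w z Y (insert i K) * poly (layer_poly w z Y (insert i K)) x
        = weight w z G K * (- 1 + x * (w * z i)) * (\<Prod>k\<in>K. - 1 + x * (w * z k))
          * ((\<Prod>j\<in>G - K. (z i - z j * w) / (z i - z j)) * (\<Prod>j\<in>G - K. - 1 + x * z j))"
      unfolding Y weight_insert_in[OF K(2) G(2) K(1)] layer_poly_def YK[unfolded Y]
      using K by (simp add: poly_prod algebra_simps)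
    also have "\<dots> = weight w z G K * ((w - 1) * PG)"
      unfolding cancel PG_def prod.subset_diff[OF K(1) G(1)] using xz by (simp add: algebra_simps)
    finally show ?thesis .
  qed
  have "(\<Sum>K\<in>Pow Y. if card K = n then weight w z Y K * poly (layer_poly w z Y K) x else 0)
      = (\<Sum>K\<in>Pow G. if Suc (card K) = n then weight w z G K * ((w - 1) * PG) else 0)"
    unfolding Y sum_card_slice_insert[where P = "\<lambda>k. k = n", OF G] using out[unfolded Y] inn[unfolded Y]
    by (simp add: sum.neutral cong: sum.cong) (intro sum.cong; simp)
  also have "\<dots> = (\<Sum>K\<in>Pow G. if Suc (card K) = n then weight w z G K else 0) * ((w - 1) * PG)"
    unfolding sum_distrib_right by (intro sum.cong) auto
  also have "(w - 1) * PG = poly (\<Prod>j\<in>Y. [:- 1, w * z j:]) x"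
    unfolding Y PG_def using G xz by (simp add: poly_prod algebra_simps)
  finally show ?thesis unfolding G_def .
qed

text \<open>Both sides have degree at most d = #{i. z_i \<noteq> 0}; they agree at the d + 1 points
  0 and 1/z_i (z_i \<noteq> 0), by the classical identity for Y and for Y - {i}.\<close>

lemma layer_poly_identity:
  assumes fin: "finite Y" and inj: "inj_on z Y" and card: "card Y = Suc m" and w: "w \<noteq> 0"
  shows "(\<Sum>K\<in>Pow Y. if card K = n then smult (weight w z Y K) (layer_poly w z Y K) else 0)
       = smult (if n = 0 then 0 else gauss_binom w m (n - 1)) (\<Prod>i\<in>Y. [:- 1, w * z i:])
       + smult (w ^ n * gauss_binom w m n) (\<Prod>i\<in>Y. [:- 1, z i:])" (is "?L = ?R")
proof -
  define Y0 where "Y0 = {i\<in>Y. z i \<noteq> 0}"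
  define A where "A = insert 0 ((\<lambda>i. 1 / z i) ` Y0)"
  have "inj_on (\<lambda>i. 1 / z i) Y0" "0 \<notin> (\<lambda>i. 1 / z i) ` Y0"
    using inj unfolding Y0_def inj_on_def by auto
  then have card_A: "card A = Suc (card Y0)"
    unfolding A_def using fin by (simp add: Y0_def card_image)
  have Y0_w: "{i\<in>Y. w * z i \<noteq> 0} = Y0" using w unfolding Y0_def by auto
  have "degree ?L \<le> card Y0"
    using layer_poly_degree[OF fin _ w] unfolding Y0_def
    by (intro degree_sum_le order.trans[OF degree_smult_le]) (auto simp: fin)
  moreover have "degree ?R \<le> card Y0"
    using degree_linear_prod_le[OF fin, of "\<lambda>_. -1" "\<lambda>i. w * z i"] degree_linear_prod_le[OF fin, of "\<lambda>_. -1" z]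
    unfolding Y0_w Y0_def by (intro degree_add_le order.trans[OF degree_smult_le]) auto
  moreover have "poly ?L x = poly ?R x" if xA: "x \<in> A" for x
  proof (cases "x = 0")
    case True
    have "poly ?L 0 = (\<Sum>K\<in>Pow Y. if card K = n then weight w z Y K * (- 1) ^ card Y else 0)"
      using layer_poly_at_0[OF fin] by (simp add: poly_sum if_distrib[of "\<lambda>p. poly p _"] cong: if_cong)
    also have "\<dots> = gauss_binom w (Suc m) n * (- 1) ^ card Y"
      unfolding weight_slice_sum[OF fin inj, symmetric] card[symmetric] sum_distrib_right
      by (intro sum.cong) auto
    finally show ?thesis
      unfolding True gauss_binom_Suc using fin by (simp add: poly_prod algebra_simps)
  next
    case False
    then obtain i where i: "i \<in> Y" "z i \<noteq> 0" and x: "x = 1 / z i"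
      using xA unfolding A_def Y0_def by auto
    have slice: "(\<Sum>K\<in>Pow (Y - {i}). if Suc (card K) = n then weight w z (Y - {i}) K else 0)
        = (if n = 0 then 0 else gauss_binom w m (n - 1))"
      using weight_slice_sum[of "Y - {i}" z "n - 1" w] fin inj i card
      by (cases n) (auto simp: inj_on_subset)
    have "poly (\<Prod>j\<in>Y. [:- 1, z j:]) x = 0"
      using fin i unfolding x by (auto simp: poly_prod intro!: bexI[of _ i])
    then show ?thesis
      using layer_poly_root[OF fin inj i, of n w] unfolding slice x[symmetric]
      by (simp add: poly_sum if_distrib[of "\<lambda>p. poly p _"] cong: if_cong)
  qed
  ultimately show ?thesis
    using card_A by (intro poly_eqI_degree[where A = A]) auto
qed

lemma layer_sum_divided:
  assumes fin: "finite Y" and inj: "inj_on z Y" and card: "card Y = Suc m" and w: "w \<noteq> 0"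
    and A: "\<And>i. i \<in> Y \<Longrightarrow> b * w * z i - 1 \<noteq> 0"
    and B: "\<And>i. i \<in> Y \<Longrightarrow> b * z i - 1 \<noteq> 0"
  shows "(\<Sum>K\<in>Pow Y. if card K = n then (\<Prod>j\<in>Y - K. 1 / (b * w * z j - 1)) * (\<Prod>k\<in>K. 1 / (b * z k - 1))
            * weight w z Y K else 0)
       = (if n = 0 then 0 else gauss_binom w m (n - 1)) / (\<Prod>i\<in>Y. b * z i - 1)
       + w ^ n * gauss_binom w m n / (\<Prod>i\<in>Y. b * w * z i - 1)"
proof -
  define PA where "PA = (\<Prod>i\<in>Y. b * w * z i - 1)"
  define PB where "PB = (\<Prod>i\<in>Y. b * z i - 1)"
  have "PA \<noteq> 0" "PB \<noteq> 0" unfolding PA_def PB_def using A B fin by auto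
  have cleared: "(\<Sum>K\<in>Pow Y. if card K = n
        then weight w z Y K * ((\<Prod>k\<in>K. b * w * z k - 1) * (\<Prod>j\<in>Y - K. b * z j - 1)) else 0)
      = (if n = 0 then 0 else gauss_binom w m (n - 1)) * PA + w ^ n * gauss_binom w m n * PB"
    using arg_cong[OF layer_poly_identity[OF fin inj card w, of n], of "\<lambda>p. poly p b"]
    unfolding PA_def PB_def layer_poly_def
    by (simp add: poly_sum poly_prod if_distrib[of "\<lambda>p. poly p _"] algebra_simps cong: if_cong)
  have cleared_term: "(\<Prod>j\<in>Y - K. 1 / (b * w * z j - 1)) * (\<Prod>k\<in>K. 1 / (b * z k - 1)) * weight w z Y K
        * (PA * PB) = weight w z Y K * ((\<Prod>k\<in>K. b * w * z k - 1) * (\<Prod>j\<in>Y - K. b * z j - 1))"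
    if "K \<in> Pow Y" for K
  proof -
    have K: "K \<subseteq> Y" "finite K" using that fin finite_subset by auto
    have "PA = (\<Prod>j\<in>Y - K. b * w * z j - 1) * (\<Prod>k\<in>K. b * w * z k - 1)"
      "PB = (\<Prod>j\<in>Y - K. b * z j - 1) * (\<Prod>k\<in>K. b * z k - 1)"
      unfolding PA_def PB_def using prod.subset_diff[OF K(1) fin] by auto
    moreover have "(\<Prod>j\<in>Y - K. b * w * z j - 1) \<noteq> 0" "(\<Prod>k\<in>K. b * z k - 1) \<noteq> 0"
      using A B K fin by auto
    ultimately show ?thesis by (simp add: prod_dividef field_simps)
  qed
  have "(\<Sum>K\<in>Pow Y. if card K = n then (\<Prod>j\<in>Y - K. 1 / (b * w * z j - 1)) * (\<Prod>k\<in>K. 1 / (b * z k - 1))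
            * weight w z Y K else 0) * (PA * PB)
      = (if n = 0 then 0 else gauss_binom w m (n - 1)) * PA + w ^ n * gauss_binom w m n * PB"
    unfolding cleared[symmetric] sum_distrib_right by (rule sum.cong) (auto simp: cleared_term)
  with \<open>PA \<noteq> 0\<close> \<open>PB \<noteq> 0\<close> show ?thesis
    unfolding PA_def[symmetric] PB_def[symmetric] by (simp add: field_simps)
qed

text \<open>The closed form of a layer.  For the extreme layers n = 0 and n = #Y only the
  denominators that actually occur need to be nonzero.\<close>

lemma layer_sum_formula:
  assumes fin: "finite Y" and inj: "inj_on z Y" and card: "card Y = Suc m" and w: "w \<noteq> 0"
    and n: "n \<le> Suc m"
    and lower: "\<And>i. 0 < n \<Longrightarrow> i \<in> Y \<Longrightarrow> b * z i - 1 \<noteq> 0"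
    and upper: "\<And>i. n < Suc m \<Longrightarrow> i \<in> Y \<Longrightarrow> b * w * z i - 1 \<noteq> 0"
  shows "(\<Sum>K\<in>Pow Y. if card K = n then (\<Prod>j\<in>Y - K. 1 / (b * w * z j - 1)) * (\<Prod>k\<in>K. 1 / (b * z k - 1))
            * weight w z Y K else 0)
       = (if n = 0 then 0 else gauss_binom w m (n - 1)) / (\<Prod>i\<in>Y. b * z i - 1)
       + w ^ n * gauss_binom w m n / (\<Prod>i\<in>Y. b * w * z i - 1)"
proof -
  define T where "T K = (\<Prod>j\<in>Y - K. 1 / (b * w * z j - 1)) * (\<Prod>k\<in>K. 1 / (b * z k - 1)) * weight w z Y K"
    for K
  consider "n = 0" | "n = Suc m" | "0 < n" "n < Suc m" using n by linarith
  then show ?thesis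
  proof cases
    case 1
    have "(\<Sum>K\<in>Pow Y. if card K = 0 then T K else 0) = T {}"
    proof (rule sum_card_slice_single[OF fin])
      show "K = {}" if "K \<subseteq> Y" "card K = 0" for K
        using that fin finite_subset[of K Y] by simp
    qed simp_all
    moreover have "T {} = 1 / (\<Prod>i\<in>Y. b * w * z i - 1)"
      unfolding T_def weight_def using fin by (simp add: prod_dividef)
    ultimately show ?thesis unfolding 1 T_def by simp
  next
    case 2
    have "(\<Sum>K\<in>Pow Y. if card K = Suc m then T K else 0) = T Y"
      by (rule sum_card_slice_single[OF fin subset_refl card]) (use card_subset_eq[OF fin] card in simp)
    moreover have "T Y = 1 / (\<Prod>i\<in>Y. b * z i - 1)"
      unfolding T_def weight_def using fin by (simp add: prod_dividef)
    ultimately show ?thesis unfolding 2 T_def by (simp add: gauss_binom_eq_0)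
  next
    case 3
    show ?thesis
    proof (rule layer_sum_divided[OF fin inj card w])
      show "b * w * z i - 1 \<noteq> 0" if "i \<in> Y" for i using upper 3 that by blast
      show "b * z i - 1 \<noteq> 0" if "i \<in> Y" for i using lower 3 that by blast
    qed
  qed
qed

section \<open>Telescoping over the layers\<close>

text \<open>The sum of the theorem in abstract form: b_n stands for the scale t w^(tau + n) of the
  n-th layer, so b_(n+1) = b_n w.  The prefactor c_n = (-1)^n prod_(q=1..n) w^(q-1) satisfies
  c_(n+1) = - c_n w^n, which turns c_n E_n into the difference g_n - g_(n+1).\<close>

lemma alternating_layer_sum:
  fixes b :: "nat \<Rightarrow> complex"
  assumes fin: "finite Y" and inj: "inj_on z Y" and card: "card Y = Suc m" and w: "w \<noteq> 0"
    and b: "\<And>n. b (Suc n) = b n * w"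
    and nz: "\<And>n i. 1 \<le> n \<Longrightarrow> n \<le> Suc m \<Longrightarrow> i \<in> Y \<Longrightarrow> b n * z i - 1 \<noteq> 0"
  shows "(\<Sum>K\<in>Pow Y. (- 1) ^ card K * (\<Prod>q\<in>{1..card K}. w ^ (q - 1))
            * ((\<Prod>j\<in>Y - K. 1 / (b (Suc (card K)) * z j - 1)) * (\<Prod>k\<in>K. 1 / (b (card K) * z k - 1))
            * weight w z Y K)) = 0" (is "sum ?f (Pow Y) = 0")
proof -
  define c where "c n = (- 1) ^ n * (\<Prod>q\<in>{1..n}. w ^ (q - 1))" for n
  define E where "E n = (\<Sum>K\<in>Pow Y. if card K = n then (\<Prod>j\<in>Y - K. 1 / (b (Suc n) * z j - 1))
      * (\<Prod>k\<in>K. 1 / (b n * z k - 1)) * weight w z Y K else 0)" for n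
  define \<alpha> where "\<alpha> n = (if n = 0 then 0 else gauss_binom w m (n - 1))" for n
  define B where "B n = (\<Prod>i\<in>Y. b n * z i - 1)" for n
  define g where "g n = c n * \<alpha> n / B n" for n
  have "sum ?f (Pow Y) = (\<Sum>n\<le>card Y. \<Sum>K\<in>Pow Y. if card K = n then ?f K else 0)"
    by (rule sum_Pow_by_card[OF fin])
  also have "\<dots> = (\<Sum>n\<le>Suc m. c n * E n)"
    unfolding card c_def E_def sum_distrib_left by (intro sum.cong refl) (simp add: mult.assoc)
  also have "\<dots> = (\<Sum>n\<le>Suc m. g n - g (Suc n))"
  proof (intro sum.cong refl)
    fix n assume "n \<in> {..Suc m}"
    then have n: "n \<le> Suc m" by simp
    have lower: "b n * z i - 1 \<noteq> 0" if "0 < n" "i \<in> Y" for i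
      using nz[of n i] n that by simp
    have upper: "b n * w * z i - 1 \<noteq> 0" if "n < Suc m" "i \<in> Y" for i
      using nz[of "Suc n" i] that unfolding b by simp
    have "E n = \<alpha> n / B n + w ^ n * gauss_binom w m n / B (Suc n)"
      unfolding E_def \<alpha>_def B_def b using layer_sum_formula[OF fin inj card w n lower upper] .
    moreover have "c (Suc n) = - (c n * w ^ n)"
      unfolding c_def by simp
    ultimately show "c n * E n = g n - g (Suc n)"
      unfolding g_def \<alpha>_def by (simp add: field_simps)
  qed
  also have "\<dots> = g 0 - g (Suc (Suc m))"
    by (rule sum_telescope)
  also have "\<dots> = 0"
    unfolding g_def \<alpha>_def by (simp add: gauss_binom_eq_0)
  finally show ?thesis .
qed

lemma sum_splittings:
  "(\<Sum>(J, K) \<in> {(J, K). J \<subseteq> Y \<and> K \<subseteq> Y \<and> J \<inter> K = {} \<and> J \<union> K = Y}. g J K)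
   = (\<Sum>K\<in>Pow Y. g (Y - K) K)"
proof -
  have "{(J, K). J \<subseteq> Y \<and> K \<subseteq> Y \<and> J \<inter> K = {} \<and> J \<union> K = Y} = (\<lambda>K. (Y - K, K)) ` Pow Y"
    by auto
  moreover have "inj_on (\<lambda>K. (Y - K, K)) (Pow Y)" by (auto simp: inj_on_def)
  ultimately show ?thesis by (simp add: sum.reindex)
qed

lemma prod_sorted_list_of_set_divide:
  fixes a :: "nat \<Rightarrow> 'b :: field" and d :: "'a :: linorder \<Rightarrow> 'b"
  assumes "finite K"
  shows "(\<Prod>q\<in>{1..card K}. a q / d (sorted_list_of_set K ! (q - 1)))
       = (\<Prod>q\<in>{1..card K}. a q) * (\<Prod>k\<in>K. 1 / d k)"
proof -
  define ks where "ks = sorted_list_of_set K"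
  have ks: "distinct ks" "set ks = K" "length ks = card K" using assms unfolding ks_def by auto
  have "(\<Prod>k\<in>K. 1 / d k) = (\<Prod>i\<in>{0..<card K}. 1 / d (ks ! i))"
    using prod.distinct_set_conv_list[OF ks(1), of "\<lambda>k. 1 / d k"] ks(2,3)
    by (simp add: prod.list_conv_set_nth)
  also have "\<dots> = (\<Prod>q\<in>{1..card K}. 1 / d (ks ! (q - 1)))"
    by (simp add: prod.atLeast1_atMost_eq atLeast0LessThan)
  finally show ?thesis
    unfolding ks_def[symmetric] by (simp add: prod.distrib[symmetric])
qed

lemma splitting_sum_layer_form:
  fixes Y :: "'a :: linorder set" and z :: "'a \<Rightarrow> complex" and \<omega> t :: complex and \<tau> :: int
  assumes "finite Y"
  shows "(\<Sum>(J, K) \<in> {(J, K). J \<subseteq> Y \<and> K \<subseteq> Y \<and> J \<inter> K = {} \<and> J \<union> K = Y}.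
            (let nD = card K; ks = sorted_list_of_set K in
              (-1) ^ nD
              * (\<Prod>j\<in>J. 1 / (t * z j * \<omega> powi (\<tau> + int nD + 1) - 1))
              * (\<Prod>q\<in>{1..nD}. \<omega> ^ (q - 1) / (t * z (ks ! (q - 1)) * \<omega> powi (\<tau> + int nD) - 1))
              * (\<Prod>j\<in>J. \<Prod>k\<in>K. (z k - z j * \<omega>) / (z k - z j))))
       = (\<Sum>K\<in>Pow Y. (- 1) ^ card K * (\<Prod>q\<in>{1..card K}. \<omega> ^ (q - 1))
            * ((\<Prod>j\<in>Y - K. 1 / (t * \<omega> powi (\<tau> + int (Suc (card K))) * z j - 1))
            * (\<Prod>k\<in>K. 1 / (t * \<omega> powi (\<tau> + int (card K)) * z k - 1)) * weight \<omega> z Y K))"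
  unfolding sum_splittings
proof (rule sum.cong[OF refl])
  fix K assume "K \<in> Pow Y"
  then have "finite K" using assms by (auto intro: finite_subset)
  then show "(let nD = card K; ks = sorted_list_of_set K in
              (-1) ^ nD
              * (\<Prod>j\<in>Y - K. 1 / (t * z j * \<omega> powi (\<tau> + int nD + 1) - 1))
              * (\<Prod>q\<in>{1..nD}. \<omega> ^ (q - 1) / (t * z (ks ! (q - 1)) * \<omega> powi (\<tau> + int nD) - 1))
              * (\<Prod>j\<in>Y - K. \<Prod>k\<in>K. (z k - z j * \<omega>) / (z k - z j)))
      = (- 1) ^ card K * (\<Prod>q\<in>{1..card K}. \<omega> ^ (q - 1))
            * ((\<Prod>j\<in>Y - K. 1 / (t * \<omega> powi (\<tau> + int (Suc (card K))) * z j - 1))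
            * (\<Prod>k\<in>K. 1 / (t * \<omega> powi (\<tau> + int (card K)) * z k - 1)) * weight \<omega> z Y K)"
    unfolding Let_def weight_def prod_sorted_list_of_set_divide[OF \<open>finite K\<close>,
        of "\<lambda>q. \<omega> ^ (q - 1)" "\<lambda>k. t * z k * \<omega> powi (\<tau> + int (card K)) - 1"]
    by (simp add: ac_simps)
qed

text \<open>The hypothesis on the denominators of the J-factors covers every layer n = 1..#Y:
  take any K of size n - 1 avoiding i.\<close>

lemma layer_denominator_nonzero:
  fixes t \<omega> :: complex and \<tau> :: int and z :: "'a \<Rightarrow> complex"
  assumes "finite Y" "card Y = Suc m"
    and denom: "\<And>K j. K \<subseteq> Y \<Longrightarrow> j \<in> Y - K \<Longrightarrow> t * z j * \<omega> powi (\<tau> + int (card K) + 1) - 1 \<noteq> 0"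
    and "1 \<le> n" "n \<le> Suc m" "i \<in> Y"
  shows "t * \<omega> powi (\<tau> + int n) * z i - 1 \<noteq> 0"
proof -
  have "n - 1 \<le> card (Y - {i})" using assms by simp
  then obtain K where K: "K \<subseteq> Y - {i}" "card K = n - 1" by (rule obtain_subset_with_card_n)
  have "K \<subseteq> Y" "i \<in> Y - K" using K(1) assms(6) by auto
  then have "t * z i * \<omega> powi (\<tau> + int (card K) + 1) - 1 \<noteq> 0" by (rule denom)
  moreover have "\<tau> + int (card K) + 1 = \<tau> + int n" using K(2) assms(4) by simp
  ultimately have "t * z i * \<omega> powi (\<tau> + int n) - 1 \<noteq> 0" by simp
  then show ?thesis by (simp add: ac_simps)
qed

lemma primitive_root_of_unity_nonzero: "0 < N \<Longrightarrow> primitive_root_of_unity N \<omega> \<Longrightarrow> \<omega> \<noteq> 0"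
  unfolding primitive_root_of_unity_def by (auto simp: power_0_left)

theorem lemmaB4:
  fixes N m :: nat and \<omega> t :: complex and \<tau> :: int
    and Y :: "nat set" and z :: "nat \<Rightarrow> complex"
  assumes "N \<ge> 2" and "primitive_root_of_unity N \<omega>"
    and "m \<ge> 1" and "finite Y" and "card Y = m"
    and "inj_on z Y"
    and "\<And>K j. K \<subseteq> Y \<Longrightarrow> j \<in> Y - K \<Longrightarrow>
           t * z j * \<omega> powi (\<tau> + int (card K) + 1) - 1 \<noteq> 0"
    and "\<And>K k. K \<subseteq> Y \<Longrightarrow> k \<in> K \<Longrightarrow>
           t * z k * \<omega> powi (\<tau> + int (card K)) - 1 \<noteq> 0"
  shows "(\<Sum>(J, K) \<in> {(J, K). J \<subseteq> Y \<and> K \<subseteq> Y \<and> J \<inter> K = {} \<and> J \<union> K = Y}.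
            (let nD = card K; ks = sorted_list_of_set K in
              (-1) ^ nD
              * (\<Prod>j\<in>J. 1 / (t * z j * \<omega> powi (\<tau> + int nD + 1) - 1))
              * (\<Prod>q\<in>{1..nD}. \<omega> ^ (q - 1) / (t * z (ks ! (q - 1)) * \<omega> powi (\<tau> + int nD) - 1))
              * (\<Prod>j\<in>J. \<Prod>k\<in>K. (z k - z j * \<omega>) / (z k - z j)))) = 0"
proof -
  obtain m' where m: "card Y = Suc m'" using assms(3,5) by (cases m) auto
  have "\<omega> \<noteq> 0" using assms(1) by (intro primitive_root_of_unity_nonzero[OF _ assms(2)]) simp
  show ?thesis
    unfolding splitting_sum_layer_form[OF assms(4)]
  proof (rule alternating_layer_sum[where b = "\<lambda>n. t * \<omega> powi (\<tau> + int n)", OF assms(4,6) m \<open>\<omega> \<noteq> 0\<close>])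
    show "t * \<omega> powi (\<tau> + int (Suc n)) = t * \<omega> powi (\<tau> + int n) * \<omega>" for n
      using \<open>\<omega> \<noteq> 0\<close> by (simp add: power_int_add add.assoc)
    show "t * \<omega> powi (\<tau> + int n) * z i - 1 \<noteq> 0" if "1 \<le> n" "n \<le> Suc m'" "i \<in> Y" for n i
      using layer_denominator_nonzero[OF assms(4) m assms(7) that] .
  qed
qed

end
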